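(* Let $\mathscr G=(\mathscr V,\mathscr E)$ be a finite connected graph with $N$ vertices, let $M\ge 0$ be an integer, and let $(Y_t)_{t\in\mathbb N}$ be the immediate exchange model on $\mathscr G$ with $M$ coins, started from an arbitrary configuration. Then for every vertex $x\in\mathscr V$ and every $c\in\{0,1,\dots,M\}$, $$\lim_{t\to\infty}P(Y_t(x)=c)=(c+1)\binom{M-c+2N-3}{2N-3}\Big/\binom{M+2N-1}{2N-1}.$$ In particular, when $N$ and $T=M/N$ are large, $\lim_{t\to\infty}P(Y_t(x)=c)\approx \frac{4c}{T^2} e^{-2c/T}$.
   Context: A configuration is a map $\xi:\mathscr V\to\mathbb N$; $\mathscr C_{N,M}$ denotes the set of configurations with $\sum_x\xi(x)=M$. The immediate exchange model is the discrete-time Markov chain on $\mathscr C_{N,M}$ evolving as follows: at each time step $t$, an edge $(x,y)\in\mathscr E$ is chosen uniformly at random, independent random variables $U_1$ uniform on $\{0,1,\dots,Y_t(x)\}$ and $U_2$ uniform on $\{0,1,\dots,Y_t(y)\}$ are drawn, and one sets $Y_{t+1}(x)=Y_t(x)-U_1+U_2$, $Y_{t+1}(y)=Y_t(y)-U_2+U_1$, and $Y_{t+1}(z)=Y_t(z)$ for $z\notin\{x,y\}$. *)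

theory Defs
  imports "HOL-Probability.Probability"
begin

text \<open>A finite simple graph: vertex set V, edge relation E (symmetric, irreflexive,
  contained in V x V); an undirected edge {x,y} is represented by both (x,y) and (y,x),
  so that the uniform distribution on E is the uniform distribution on undirected edges
  (the dynamics is symmetric in x and y).\<close>

definition simple_graph :: "'a set \<Rightarrow> ('a \<times> 'a) set \<Rightarrow> bool" where
  "simple_graph V E \<longleftrightarrow> finite V \<and> E \<subseteq> V \<times> V \<and> sym E \<and> (\<forall>x. (x, x) \<notin> E)"

definition connected_graph :: "'a set \<Rightarrow> ('a \<times> 'a) set \<Rightarrow> bool" where
  "connected_graph V E \<longleftrightarrow> (\<forall>x\<in>V. \<forall>y\<in>V. (x, y) \<in> E\<^sup>*)"

definition configs :: "'a set \<Rightarrow> nat \<Rightarrow> ('a \<Rightarrow> nat) set" where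
  "configs V M = {\<xi>. (\<forall>z. z \<notin> V \<longrightarrow> \<xi> z = 0) \<and> (\<Sum>x\<in>V. \<xi> x) = M}"

definition ie_step :: "('a \<times> 'a) set \<Rightarrow> ('a \<Rightarrow> nat) \<Rightarrow> ('a \<Rightarrow> nat) pmf" where
  "ie_step E \<eta> =
     pmf_of_set E \<bind> (\<lambda>(x, y).
       pmf_of_set {0..\<eta> x} \<bind> (\<lambda>u1.
       pmf_of_set {0..\<eta> y} \<bind> (\<lambda>u2.
         return_pmf (\<eta>(x := \<eta> x - u1 + u2, y := \<eta> y - u2 + u1)))))"

definition ie_dist :: "('a \<times> 'a) set \<Rightarrow> ('a \<Rightarrow> nat) \<Rightarrow> nat \<Rightarrow> ('a \<Rightarrow> nat) pmf" where
  "ie_dist E \<xi> t = ((\<lambda>p. p \<bind> ie_step E) ^^ t) (return_pmf \<xi>)"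

end

theory Submission
  imports Defs
begin

(*
  The weights w(eta) = prod_v (eta(v) + 1) are reversible for the chain: on an edge {x, y}
  the exchange with (U1, U2) = (u1, u2) is undone by (u2, u1), and the probability
  1 / ((eta(x) + 1) (eta(y) + 1)) of drawing a given pair cancels the factors of w at x and y.
  Coins can be moved one at a time along paths, so the chain is irreducible on configurations
  with M coins, and it is lazy because U1 = U2 = 0 is always possible; a Doeblin contraction
  argument then gives convergence to the normalised weights. The normalising constant is
  sum_{|eta| = M} prod_v (eta(v) + 1) = C(M + 2N - 1, 2N - 1), the coefficient of z^M in
  (1 - z)^(-2N), and fixing eta(x) = c leaves c + 1 times the same sum over N - 1 sites.
*)

section \<open>Binomial sums\<close>

lemma sum_choose_diff_upper:
  "(\<Sum>k\<le>M. (M - k + m) choose m) = (M + m + 1) choose (m + 1)"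
proof (induction M)
  case (Suc M)
  have "(\<Sum>k\<le>Suc M. (Suc M - k + m) choose m)
          = ((Suc M + m) choose m) + (\<Sum>k\<le>M. (M - k + m) choose m)"
    by (subst sum.atMost_Suc_shift) simp
  also have "\<dots> = (Suc M + m + 1) choose (m + 1)" using Suc by simp
  finally show ?case .
qed simp

lemma sum_mult_choose_diff_upper:
  "(\<Sum>k\<le>M. (k + 1) * ((M - k + m) choose m)) = (M + m + 2) choose (m + 2)"
proof (induction M)
  case (Suc M)
  have "(\<Sum>k\<le>Suc M. (k + 1) * ((Suc M - k + m) choose m))
          = ((Suc M + m) choose m) + (\<Sum>k\<le>M. (k + 1) * ((M - k + m) choose m))
              + (\<Sum>k\<le>M. (M - k + m) choose m)"
    by (subst sum.atMost_Suc_shift) (simp add: sum.distrib[symmetric] add_ac)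
  also have "\<dots> = (Suc M + m + 2) choose (m + 2)"
    using Suc sum_choose_diff_upper[of M m] by (simp add: numeral_2_eq_2)
  finally show ?case .
qed simp

section \<open>Convergence of finite irreducible lazy Markov chains\<close>

definition markov_iter :: "('s \<Rightarrow> 's pmf) \<Rightarrow> nat \<Rightarrow> 's \<Rightarrow> 's pmf" where
  "markov_iter P n s = ((\<lambda>p. p \<bind> P) ^^ n) (return_pmf s)"

context
  fixes P :: "'s \<Rightarrow> 's pmf"
begin

lemma markov_iter_0 [simp]: "markov_iter P 0 s = return_pmf s"
  by (simp add: markov_iter_def)

lemma markov_iter_Suc: "markov_iter P (Suc n) s = markov_iter P n s \<bind> P"
  by (simp add: markov_iter_def)

lemma funpow_bind_pmf: "((\<lambda>p. p \<bind> P) ^^ n) q = q \<bind> markov_iter P n"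
  by (induction n) (simp_all add: bind_return_pmf' bind_assoc_pmf markov_iter_Suc)

lemma markov_iter_add: "markov_iter P (m + n) s = markov_iter P m s \<bind> markov_iter P n"
proof -
  have "markov_iter P (m + n) s = ((\<lambda>p. p \<bind> P) ^^ n) (markov_iter P m s)"
    by (simp only: markov_iter_def add.commute[of m n] funpow_add o_apply)
  then show ?thesis by (simp only: funpow_bind_pmf)
qed

lemma bind_markov_iter_stationary:
  assumes "\<pi> \<bind> P = \<pi>"
  shows "\<pi> \<bind> markov_iter P n = \<pi>"
proof -
  have "((\<lambda>p. p \<bind> P) ^^ n) \<pi> = \<pi>"
    using assms by (induction n) simp_all
  then show ?thesis by (simp only: funpow_bind_pmf)
qed

lemma set_markov_iter_Suc:
  "set_pmf (markov_iter P (Suc n) s) = (\<Union>a\<in>set_pmf (markov_iter P n s). set_pmf (P a))"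
  by (simp add: markov_iter_Suc)

lemma set_markov_iter_subset:
  assumes "\<And>a. a \<in> S \<Longrightarrow> set_pmf (P a) \<subseteq> S" "s \<in> S"
  shows "set_pmf (markov_iter P n s) \<subseteq> S"
proof (induction n)
  case (Suc n)
  then show ?case unfolding set_markov_iter_Suc using assms(1) by blast
qed (simp add: \<open>s \<in> S\<close>)

lemma markov_iter_reachable:
  assumes "(s, s') \<in> {(a, b). b \<in> set_pmf (P a)}\<^sup>*"
  shows "\<exists>n. s' \<in> set_pmf (markov_iter P n s)"
  using assms
proof (induction rule: rtrancl_induct)
  case base
  have "s \<in> set_pmf (markov_iter P 0 s)" by simp
  then show ?case ..
next
  case (step b c)
  then obtain n where "b \<in> set_pmf (markov_iter P n s)" by blast
  with step(2) have "c \<in> set_pmf (markov_iter P (Suc n) s)" unfolding set_markov_iter_Suc by blast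
  then show ?case ..
qed

lemma set_markov_iter_mono:
  assumes closed: "\<And>a. a \<in> S \<Longrightarrow> set_pmf (P a) \<subseteq> S" and lazy: "\<And>a. a \<in> S \<Longrightarrow> a \<in> set_pmf (P a)"
    and "s \<in> S" "n \<le> m"
  shows "set_pmf (markov_iter P n s) \<subseteq> set_pmf (markov_iter P m s)"
  using \<open>n \<le> m\<close>
proof (induction m rule: dec_induct)
  case (step m)
  have "set_pmf (markov_iter P m s) \<subseteq> S" by (rule set_markov_iter_subset[OF closed \<open>s \<in> S\<close>])
  with lazy have "set_pmf (markov_iter P m s) \<subseteq> set_pmf (markov_iter P (Suc m) s)"
    unfolding set_markov_iter_Suc by blast
  with step.IH show ?case by simp
qed simp

lemma markov_iter_uniform_support:
  assumes "finite S"
    and closed: "\<And>a. a \<in> S \<Longrightarrow> set_pmf (P a) \<subseteq> S"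
    and irreducible: "\<And>a b. a \<in> S \<Longrightarrow> b \<in> S \<Longrightarrow> (a, b) \<in> {(a, b). b \<in> set_pmf (P a)}\<^sup>*"
    and lazy: "\<And>a. a \<in> S \<Longrightarrow> a \<in> set_pmf (P a)"
  obtains K where "0 < K" "\<And>a b. a \<in> S \<Longrightarrow> b \<in> S \<Longrightarrow> b \<in> set_pmf (markov_iter P K a)"
proof -
  have "\<forall>p\<in>S \<times> S. \<exists>n. snd p \<in> set_pmf (markov_iter P n (fst p))"
    using irreducible markov_iter_reachable by auto
  then obtain f where f: "\<forall>p\<in>S \<times> S. snd p \<in> set_pmf (markov_iter P (f p) (fst p))"
    by metis
  define K where "K = Suc (Max (f ` (S \<times> S)))"
  have "b \<in> set_pmf (markov_iter P K a)" if "a \<in> S" "b \<in> S" for a b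
  proof -
    have "f (a, b) \<le> Max (f ` (S \<times> S))" using that \<open>finite S\<close> by (intro Max_ge) auto
    then have "f (a, b) \<le> K" by (simp add: K_def)
    moreover have "b \<in> set_pmf (markov_iter P (f (a, b)) a)" using f that by auto
    ultimately show ?thesis using set_markov_iter_mono[OF closed lazy \<open>a \<in> S\<close>] by blast
  qed
  moreover have "0 < K" by (simp add: K_def)
  ultimately show ?thesis using that by blast
qed

end

lemma doeblin_contraction:
  fixes \<delta> :: real and \<nu> :: "'s \<Rightarrow> real" and Q :: "'s \<Rightarrow> 's \<Rightarrow> real"
  assumes "finite S" and "sum \<nu> S = 0"
    and Q_ge: "\<And>a b. a \<in> S \<Longrightarrow> b \<in> S \<Longrightarrow> \<delta> \<le> Q a b"
    and Q_sum: "\<And>a. a \<in> S \<Longrightarrow> sum (Q a) S = 1"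
  shows "(\<Sum>b\<in>S. \<bar>\<Sum>a\<in>S. \<nu> a * Q a b\<bar>) \<le> (1 - real (card S) * \<delta>) * (\<Sum>a\<in>S. \<bar>\<nu> a\<bar>)"
proof -
  \<comment> \<open>As \<open>\<nu>\<close> has total mass zero, the common part \<open>\<delta>\<close> of the rows of \<open>Q\<close> cancels.\<close>
  have shift: "(\<Sum>a\<in>S. \<nu> a * Q a b) = (\<Sum>a\<in>S. \<nu> a * (Q a b - \<delta>))" for b
    using \<open>sum \<nu> S = 0\<close> by (simp add: right_diff_distrib sum_subtractf sum_distrib_right[symmetric])
  have "(\<Sum>b\<in>S. \<bar>\<Sum>a\<in>S. \<nu> a * Q a b\<bar>) \<le> (\<Sum>b\<in>S. \<Sum>a\<in>S. \<bar>\<nu> a\<bar> * (Q a b - \<delta>))"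
  proof (rule sum_mono)
    fix b assume "b \<in> S"
    have "\<bar>\<Sum>a\<in>S. \<nu> a * (Q a b - \<delta>)\<bar> \<le> (\<Sum>a\<in>S. \<bar>\<nu> a * (Q a b - \<delta>)\<bar>)"
      by (rule sum_abs)
    also have "\<dots> = (\<Sum>a\<in>S. \<bar>\<nu> a\<bar> * (Q a b - \<delta>))"
      using Q_ge \<open>b \<in> S\<close> by (intro sum.cong) (simp_all add: abs_mult)
    finally show "\<bar>\<Sum>a\<in>S. \<nu> a * Q a b\<bar> \<le> (\<Sum>a\<in>S. \<bar>\<nu> a\<bar> * (Q a b - \<delta>))"
      by (simp only: shift)
  qed
  also have "\<dots> = (\<Sum>a\<in>S. \<bar>\<nu> a\<bar> * (\<Sum>b\<in>S. Q a b - \<delta>))"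
    by (subst sum.swap) (simp add: sum_distrib_left)
  also have "\<dots> = (\<Sum>a\<in>S. \<bar>\<nu> a\<bar> * (1 - real (card S) * \<delta>))"
    using Q_sum by (intro sum.cong) (simp_all add: sum_subtractf)
  also have "\<dots> = (1 - real (card S) * \<delta>) * (\<Sum>a\<in>S. \<bar>\<nu> a\<bar>)"
    by (simp add: sum_distrib_right mult.commute)
  finally show ?thesis .
qed

lemma tendsto_zero_if_block_contraction:
  fixes d :: "nat \<Rightarrow> real"
  assumes "0 < K" "0 \<le> \<rho>" "\<rho> < 1" "\<And>t. 0 \<le> d t" "\<And>t. d t \<le> B"
    and contraction: "\<And>t. d (t + K) \<le> \<rho> * d t"
  shows "d \<longlonglongrightarrow> 0"
proof -
  have decay: "d (r + n * K) \<le> \<rho> ^ n * B" for r n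
  proof (induction n)
    case (Suc n)
    have "d (r + Suc n * K) = d ((r + n * K) + K)" by (simp add: algebra_simps)
    also have "\<dots> \<le> \<rho> * d (r + n * K)" by (rule contraction)
    also have "\<dots> \<le> \<rho> * (\<rho> ^ n * B)" using Suc.IH \<open>0 \<le> \<rho>\<close> by (rule mult_left_mono)
    finally show ?case by simp
  qed (simp add: assms(5))
  have "d t \<le> \<rho> ^ (t div K) * B" for t
    using decay[of "t mod K" "t div K"] by (simp add: mod_div_mult_eq)
  moreover have "(\<lambda>t. \<rho> ^ (t div K) * B) \<longlonglongrightarrow> 0"
    by (intro tendsto_mult_left_zero filterlim_compose[OF LIMSEQ_power_zero]
        filterlim_at_top_div_const_nat) (use assms in auto)
  ultimately show ?thesis
    using assms(4) by (intro tendsto_sandwich[of "\<lambda>_. 0" d sequentially "\<lambda>t. \<rho> ^ (t div K) * B"]) auto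
qed

lemma pmf_bind_eq_sum:
  "finite S \<Longrightarrow> set_pmf p \<subseteq> S \<Longrightarrow> pmf (p \<bind> f) b = (\<Sum>a\<in>S. pmf p a * pmf (f a) b)"
  unfolding pmf_bind by (subst integral_measure_pmf_real[of S]) (auto simp: mult.commute)

lemma prob_eq_sum_pmf:
  "finite S \<Longrightarrow> set_pmf p \<subseteq> S \<Longrightarrow> measure_pmf.prob p A = (\<Sum>a\<in>A \<inter> S. pmf p a)"
  by (subst measure_prob_cong_0[of A "A \<inter> S"]) (auto simp: measure_measure_pmf_finite set_pmf_eq)

context
  fixes S :: "'s set" and p q :: "'s pmf"
  assumes "finite S" and "set_pmf p \<subseteq> S" and "set_pmf q \<subseteq> S"
begin

lemma abs_prob_diff_le_l1_dist:
  "\<bar>measure_pmf.prob p A - measure_pmf.prob q A\<bar> \<le> (\<Sum>a\<in>S. \<bar>pmf p a - pmf q a\<bar>)"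
proof -
  have "\<bar>measure_pmf.prob p A - measure_pmf.prob q A\<bar> = \<bar>\<Sum>a\<in>A \<inter> S. pmf p a - pmf q a\<bar>"
    using prob_eq_sum_pmf[OF \<open>finite S\<close>] \<open>set_pmf p \<subseteq> S\<close> \<open>set_pmf q \<subseteq> S\<close>
    by (simp add: sum_subtractf)
  also have "\<dots> \<le> (\<Sum>a\<in>A \<inter> S. \<bar>pmf p a - pmf q a\<bar>)" by (rule sum_abs)
  also have "\<dots> \<le> (\<Sum>a\<in>S. \<bar>pmf p a - pmf q a\<bar>)" using \<open>finite S\<close> by (intro sum_mono2) auto
  finally show ?thesis .
qed

lemma l1_dist_le_2: "(\<Sum>a\<in>S. \<bar>pmf p a - pmf q a\<bar>) \<le> 2"
proof -
  have "(\<Sum>a\<in>S. \<bar>pmf p a - pmf q a\<bar>) \<le> (\<Sum>a\<in>S. pmf p a + pmf q a)"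
    by (intro sum_mono) (simp add: abs_le_iff add_increasing add_increasing2)
  also have "\<dots> = 2"
    using \<open>finite S\<close> \<open>set_pmf p \<subseteq> S\<close> \<open>set_pmf q \<subseteq> S\<close> by (simp add: sum.distrib sum_pmf_eq_1)
  finally show ?thesis .
qed

lemma l1_dist_bind_le:
  assumes "\<And>a. a \<in> S \<Longrightarrow> set_pmf (Q a) \<subseteq> S"
    and "\<And>a b. a \<in> S \<Longrightarrow> b \<in> S \<Longrightarrow> \<delta> \<le> pmf (Q a) b"
  shows "(\<Sum>b\<in>S. \<bar>pmf (p \<bind> Q) b - pmf (q \<bind> Q) b\<bar>)
           \<le> (1 - real (card S) * \<delta>) * (\<Sum>a\<in>S. \<bar>pmf p a - pmf q a\<bar>)"
proof -
  have "pmf (p \<bind> Q) b - pmf (q \<bind> Q) b = (\<Sum>a\<in>S. (pmf p a - pmf q a) * pmf (Q a) b)" for b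
    using \<open>finite S\<close> \<open>set_pmf p \<subseteq> S\<close> \<open>set_pmf q \<subseteq> S\<close>
    by (simp add: pmf_bind_eq_sum left_diff_distrib sum_subtractf)
  moreover have "(\<Sum>a\<in>S. pmf p a - pmf q a) = 0"
    using \<open>finite S\<close> \<open>set_pmf p \<subseteq> S\<close> \<open>set_pmf q \<subseteq> S\<close> by (simp add: sum_subtractf sum_pmf_eq_1)
  ultimately show ?thesis
    using \<open>finite S\<close> assms by (simp add: doeblin_contraction sum_pmf_eq_1)
qed

end

lemma markov_iter_minorization:
  assumes "finite S" "S \<noteq> {}"
    and closed: "\<And>a. a \<in> S \<Longrightarrow> set_pmf (P a) \<subseteq> S"
    and irreducible: "\<And>a b. a \<in> S \<Longrightarrow> b \<in> S \<Longrightarrow> (a, b) \<in> {(a, b). b \<in> set_pmf (P a)}\<^sup>*"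
    and lazy: "\<And>a. a \<in> S \<Longrightarrow> a \<in> set_pmf (P a)"
  obtains K \<delta> where "0 < K" "0 \<le> 1 - real (card S) * \<delta>" "1 - real (card S) * \<delta> < 1"
    "\<And>a b. a \<in> S \<Longrightarrow> b \<in> S \<Longrightarrow> \<delta> \<le> pmf (markov_iter P K a) b"
proof -
  obtain K where "0 < K" and support: "\<And>a b. a \<in> S \<Longrightarrow> b \<in> S \<Longrightarrow> b \<in> set_pmf (markov_iter P K a)"
    using markov_iter_uniform_support[OF \<open>finite S\<close> closed irreducible lazy] by blast
  define \<delta> where "\<delta> = Min ((\<lambda>(a, b). pmf (markov_iter P K a) b) ` (S \<times> S))"
  have \<delta>_le: "\<delta> \<le> pmf (markov_iter P K a) b" if "a \<in> S" "b \<in> S" for a b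
    unfolding \<delta>_def using \<open>finite S\<close> that by (intro Min_le) auto
  have "0 < \<delta>"
    unfolding \<delta>_def using \<open>finite S\<close> \<open>S \<noteq> {}\<close> support by (subst Min_gr_iff) (auto simp: pmf_positive)
  then have "0 < real (card S) * \<delta>"
    using \<open>finite S\<close> \<open>S \<noteq> {}\<close> by (simp add: card_gt_0_iff)
  moreover obtain s where "s \<in> S" using \<open>S \<noteq> {}\<close> by blast
  then have "real (card S) * \<delta> \<le> (\<Sum>b\<in>S. pmf (markov_iter P K s) b)"
    using \<delta>_le sum_mono[of S "\<lambda>_. \<delta>"] by simp
  then have "real (card S) * \<delta> \<le> 1"
    using sum_pmf_eq_1[OF \<open>finite S\<close> set_markov_iter_subset[OF closed \<open>s \<in> S\<close>]] by simp
  ultimately show ?thesis using that \<open>0 < K\<close> \<delta>_le by simp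
qed

lemma l1_dist_markov_iter_tendsto_0:
  assumes "finite S" "s \<in> S"
    and closed: "\<And>a. a \<in> S \<Longrightarrow> set_pmf (P a) \<subseteq> S"
    and irreducible: "\<And>a b. a \<in> S \<Longrightarrow> b \<in> S \<Longrightarrow> (a, b) \<in> {(a, b). b \<in> set_pmf (P a)}\<^sup>*"
    and lazy: "\<And>a. a \<in> S \<Longrightarrow> a \<in> set_pmf (P a)"
    and stationary: "\<pi> \<bind> P = \<pi>" "set_pmf \<pi> \<subseteq> S"
  shows "(\<lambda>t. \<Sum>c\<in>S. \<bar>pmf (markov_iter P t s) c - pmf \<pi> c\<bar>) \<longlonglongrightarrow> 0"
    (is "?d \<longlonglongrightarrow> 0")
proof -
  obtain K \<delta> where "0 < K" and \<rho>: "0 \<le> 1 - real (card S) * \<delta>" "1 - real (card S) * \<delta> < 1"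
    and \<delta>_le: "\<And>a b. a \<in> S \<Longrightarrow> b \<in> S \<Longrightarrow> \<delta> \<le> pmf (markov_iter P K a) b"
    using markov_iter_minorization[OF \<open>finite S\<close> _ closed irreducible lazy] \<open>s \<in> S\<close> by blast
  have closed_K: "set_pmf (markov_iter P K a) \<subseteq> S" if "a \<in> S" for a
    using set_markov_iter_subset[OF closed that] .
  have closed_t: "set_pmf (markov_iter P t s) \<subseteq> S" for t
    using set_markov_iter_subset[OF closed \<open>s \<in> S\<close>] .
  have contraction: "?d (t + K) \<le> (1 - real (card S) * \<delta>) * ?d t" for t
  proof -
    have "?d (t + K) = (\<Sum>c\<in>S. \<bar>pmf (markov_iter P t s \<bind> markov_iter P K) c
                                  - pmf (\<pi> \<bind> markov_iter P K) c\<bar>)"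
      unfolding markov_iter_add bind_markov_iter_stationary[OF stationary(1)] ..
    also have "\<dots> \<le> (1 - real (card S) * \<delta>) * ?d t"
      by (rule l1_dist_bind_le[OF \<open>finite S\<close> closed_t stationary(2), where Q = "markov_iter P K",
            OF closed_K \<delta>_le])
    finally show ?thesis .
  qed
  show ?thesis
    using \<open>0 < K\<close> \<rho> l1_dist_le_2[OF \<open>finite S\<close> closed_t stationary(2)] contraction
    by (intro tendsto_zero_if_block_contraction[where d = ?d and \<rho> = "1 - real (card S) * \<delta>" and B = 2])
      (auto intro: sum_nonneg)
qed

theorem markov_iter_tendsto_stationary:
  assumes "finite S" "s \<in> S"
    and closed: "\<And>a. a \<in> S \<Longrightarrow> set_pmf (P a) \<subseteq> S"
    and irreducible: "\<And>a b. a \<in> S \<Longrightarrow> b \<in> S \<Longrightarrow> (a, b) \<in> {(a, b). b \<in> set_pmf (P a)}\<^sup>*"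
    and lazy: "\<And>a. a \<in> S \<Longrightarrow> a \<in> set_pmf (P a)"
    and stationary: "\<pi> \<bind> P = \<pi>" "set_pmf \<pi> \<subseteq> S"
  shows "(\<lambda>t. measure_pmf.prob (markov_iter P t s) A) \<longlonglongrightarrow> measure_pmf.prob \<pi> A"
proof -
  have "norm (measure_pmf.prob (markov_iter P t s) A - measure_pmf.prob \<pi> A)
          \<le> (\<Sum>c\<in>S. \<bar>pmf (markov_iter P t s) c - pmf \<pi> c\<bar>)" for t
    using abs_prob_diff_le_l1_dist[OF \<open>finite S\<close> set_markov_iter_subset[OF closed \<open>s \<in> S\<close>] stationary(2)]
    by simp
  then have "(\<lambda>t. measure_pmf.prob (markov_iter P t s) A - measure_pmf.prob \<pi> A) \<longlonglongrightarrow> 0"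
    by (intro Lim_null_comparison[OF always_eventually l1_dist_markov_iter_tendsto_0[OF assms]]) simp
  then show ?thesis by (rule LIM_zero_cancel)
qed

definition weighted_pmf :: "'s set \<Rightarrow> ('s \<Rightarrow> real) \<Rightarrow> 's pmf" where
  "weighted_pmf S w = embed_pmf (\<lambda>s. if s \<in> S then w s / sum w S else 0)"

context
  fixes S :: "'s set" and w :: "'s \<Rightarrow> real"
  assumes finite: "finite S" and nonneg: "\<And>s. s \<in> S \<Longrightarrow> 0 \<le> w s" and pos: "0 < sum w S"
begin

lemma pmf_weighted_pmf: "pmf (weighted_pmf S w) s = (if s \<in> S then w s / sum w S else 0)"
  unfolding weighted_pmf_def
proof (rule pmf_embed_pmf)
  have "(\<integral>\<^sup>+s. ennreal (if s \<in> S then w s / sum w S else 0) \<partial>count_space UNIV)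
        = ennreal (\<Sum>s\<in>S. w s / sum w S)"
    using finite nonneg pos by (subst nn_integral_count_space'[OF finite]) (auto intro: sum_ennreal)
  also have "\<dots> = 1"
    using pos by (simp add: sum_divide_distrib[symmetric])
  finally show "(\<integral>\<^sup>+s. ennreal (if s \<in> S then w s / sum w S else 0) \<partial>count_space UNIV) = 1" .
qed (use nonneg pos in auto)

lemma set_pmf_weighted_pmf: "set_pmf (weighted_pmf S w) \<subseteq> S"
  by (auto simp: set_pmf_iff pmf_weighted_pmf split: if_splits)

lemma prob_weighted_pmf: "measure_pmf.prob (weighted_pmf S w) A = (\<Sum>s\<in>A \<inter> S. w s) / sum w S"
  by (simp add: prob_eq_sum_pmf[OF finite set_pmf_weighted_pmf] pmf_weighted_pmf sum_divide_distrib)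

lemma weighted_pmf_stationary:
  assumes closed: "\<And>a. a \<in> S \<Longrightarrow> set_pmf (P a) \<subseteq> S"
    and detailed_balance: "\<And>a b. a \<in> S \<Longrightarrow> b \<in> S \<Longrightarrow> w a * pmf (P a) b = w b * pmf (P b) a"
  shows "weighted_pmf S w \<bind> P = weighted_pmf S w"
proof (rule pmf_eqI)
  fix b
  have "pmf (weighted_pmf S w \<bind> P) b = (\<Sum>a\<in>S. w a * pmf (P a) b) / sum w S"
    by (simp add: pmf_bind_eq_sum[OF finite set_pmf_weighted_pmf] pmf_weighted_pmf sum_divide_distrib)
  also have "\<dots> = pmf (weighted_pmf S w) b"
  proof (cases "b \<in> S")
    case True
    have "(\<Sum>a\<in>S. w a * pmf (P a) b) = w b * (\<Sum>a\<in>S. pmf (P b) a)"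
      using True by (simp add: detailed_balance sum_distrib_left)
    also have "\<dots> = w b" using sum_pmf_eq_1[OF finite closed[OF True]] by simp
    finally show ?thesis using True by (simp add: pmf_weighted_pmf)
  next
    case False
    then have "pmf (P a) b = 0" if "a \<in> S" for a
      using closed[OF that] by (auto simp: set_pmf_eq)
    then show ?thesis using False by (simp add: pmf_weighted_pmf)
  qed
  finally show "pmf (weighted_pmf S w \<bind> P) b = pmf (weighted_pmf S w) b" .
qed

end

section \<open>The immediate exchange model\<close>

lemma ie_dist_eq_markov_iter: "ie_dist E \<xi> t = markov_iter (ie_step E) t \<xi>"
  by (simp add: ie_dist_def markov_iter_def)

lemma simple_graph_finite_edges: "simple_graph V E \<Longrightarrow> finite E"
  unfolding simple_graph_def using finite_subset by blast

lemma simple_graph_edge_neq: "simple_graph V E \<Longrightarrow> (x, y) \<in> E \<Longrightarrow> x \<in> V \<and> y \<in> V \<and> x \<noteq> y"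
  unfolding simple_graph_def by auto

lemma connected_graph_edges_nonempty:
  assumes "connected_graph V E" "x \<in> V" "y \<in> V" "x \<noteq> y"
  shows "E \<noteq> {}"
  using assms unfolding connected_graph_def by (metis empty_iff rtranclE)

lemma configs_outside: "\<eta> \<in> configs V M \<Longrightarrow> z \<notin> V \<Longrightarrow> \<eta> z = 0"
  by (simp add: configs_def)

lemma configs_le: "\<eta> \<in> configs V M \<Longrightarrow> finite V \<Longrightarrow> \<eta> x \<le> M"
  unfolding configs_def by (cases "x \<in> V") (auto intro: member_le_sum[where f = \<eta>, simplified])

lemma finite_configs:
  assumes "finite V"
  shows "finite (configs V M)"
proof (rule finite_subset)
  show "configs V M \<subseteq> {\<eta>. \<forall>x. (x \<in> V \<longrightarrow> \<eta> x \<in> {..M}) \<and> (x \<notin> V \<longrightarrow> \<eta> x = 0)}"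
    using configs_le[OF _ assms] configs_outside by auto
qed (rule finite_set_of_finite_funs[OF assms finite_atMost])

lemma configs_ex_less:
  assumes "a \<in> configs V M" "b \<in> configs V M" "a \<noteq> b" "finite V"
  obtains v where "v \<in> V" "a v < b v"
proof -
  have "\<not> (\<forall>v\<in>V. b v \<le> a v)"
  proof
    assume le: "\<forall>v\<in>V. b v \<le> a v"
    have "sum b V = sum a V" using assms(1,2) by (simp add: configs_def)
    then have "b v = a v" if "v \<in> V" for v
      by (rule sum_mono_inv) (use le that \<open>finite V\<close> in auto)
    then have "a = b" using configs_outside assms(1,2) by (metis ext)
    with \<open>a \<noteq> b\<close> show False ..
  qed
  then show ?thesis using that by (meson not_le)
qed

definition exchange :: "('a \<Rightarrow> nat) \<Rightarrow> 'a \<Rightarrow> 'a \<Rightarrow> nat \<Rightarrow> nat \<Rightarrow> 'a \<Rightarrow> nat" where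
  "exchange \<eta> x y u1 u2 = \<eta>(x := \<eta> x - u1 + u2, y := \<eta> y - u2 + u1)"

lemma exchange_apply:
  assumes "x \<noteq> y"
  shows "exchange \<eta> x y u1 u2 z = (if z = x then \<eta> x - u1 + u2 else if z = y then \<eta> y - u2 + u1 else \<eta> z)"
  using assms by (simp add: exchange_def)

lemma exchange_0_0 [simp]: "exchange \<eta> x y 0 0 = \<eta>"
  by (simp add: exchange_def)

lemma exchange_exchange:
  "x \<noteq> y \<Longrightarrow> u1 \<le> \<eta> x \<Longrightarrow> u2 \<le> \<eta> y \<Longrightarrow> exchange (exchange \<eta> x y u1 u2) x y u2 u1 = \<eta>"
  by (auto simp: exchange_apply)

lemma exchange_in_configs:
  assumes "\<eta> \<in> configs V M" "finite V" "x \<in> V" "y \<in> V" "x \<noteq> y" "u1 \<le> \<eta> x" "u2 \<le> \<eta> y"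
  shows "exchange \<eta> x y u1 u2 \<in> configs V M"
proof -
  let ?\<eta>' = "exchange \<eta> x y u1 u2"
  have xy: "{x, y} \<subseteq> V" using assms by simp
  have "sum ?\<eta>' V = sum ?\<eta>' (V - {x, y}) + sum ?\<eta>' {x, y}"
    by (rule sum.subset_diff[OF xy \<open>finite V\<close>])
  also have "\<dots> = sum \<eta> (V - {x, y}) + sum \<eta> {x, y}"
    using assms(5-7) by (simp add: exchange_apply)
  also have "\<dots> = sum \<eta> V"
    by (rule sum.subset_diff[OF xy \<open>finite V\<close>, symmetric])
  finally show ?thesis
    using assms by (auto simp: configs_def exchange_apply)
qed

lemma ie_step_eq_exchange:
  "ie_step E \<eta> = pmf_of_set E \<bind> (\<lambda>(x, y). pmf_of_set {0..\<eta> x} \<bind> (\<lambda>u1.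
     pmf_of_set {0..\<eta> y} \<bind> (\<lambda>u2. return_pmf (exchange \<eta> x y u1 u2))))"
  unfolding ie_step_def exchange_def ..

lemma set_pmf_ie_step:
  assumes "finite E" "E \<noteq> {}"
  shows "set_pmf (ie_step E \<eta>) = {exchange \<eta> x y u1 u2 | x y u1 u2. (x, y) \<in> E \<and> u1 \<le> \<eta> x \<and> u2 \<le> \<eta> y}"
  using assms unfolding ie_step_eq_exchange by force

lemma ie_step_self:
  assumes "finite E" "E \<noteq> {}"
  shows "\<eta> \<in> set_pmf (ie_step E \<eta>)"
proof -
  obtain x y where "(x, y) \<in> E" using \<open>E \<noteq> {}\<close> by auto
  then have "exchange \<eta> x y 0 0 \<in> set_pmf (ie_step E \<eta>)"
    unfolding set_pmf_ie_step[OF assms] by blast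
  then show ?thesis by simp
qed

lemma set_pmf_ie_step_configs:
  assumes "simple_graph V E" "E \<noteq> {}" "\<eta> \<in> configs V M"
  shows "set_pmf (ie_step E \<eta>) \<subseteq> configs V M"
proof
  fix \<eta>' assume "\<eta>' \<in> set_pmf (ie_step E \<eta>)"
  then obtain x y u1 u2 where "(x, y) \<in> E" "u1 \<le> \<eta> x" "u2 \<le> \<eta> y" "\<eta>' = exchange \<eta> x y u1 u2"
    unfolding set_pmf_ie_step[OF simple_graph_finite_edges[OF assms(1)] assms(2)] by blast
  moreover have "finite V" using assms(1) by (simp add: simple_graph_def)
  ultimately show "\<eta>' \<in> configs V M"
    using exchange_in_configs[OF assms(3)] simple_graph_edge_neq[OF assms(1)] by blast
qed

definition exchange_pairs :: "('a \<Rightarrow> nat) \<Rightarrow> 'a \<Rightarrow> 'a \<Rightarrow> ('a \<Rightarrow> nat) \<Rightarrow> (nat \<times> nat) set" where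
  "exchange_pairs \<eta> x y \<eta>' = {(u1, u2) \<in> {0..\<eta> x} \<times> {0..\<eta> y}. exchange \<eta> x y u1 u2 = \<eta>'}"

lemma finite_exchange_pairs: "finite (exchange_pairs \<eta> x y \<eta>')"
  unfolding exchange_pairs_def by (rule finite_subset[of _ "{0..\<eta> x} \<times> {0..\<eta> y}"]) auto

lemma swap_exchange_pairs_subset:
  assumes "x \<noteq> y"
  shows "prod.swap ` exchange_pairs \<eta> x y \<eta>' \<subseteq> exchange_pairs \<eta>' x y \<eta>"
  using assms exchange_exchange[OF assms]
  by (auto simp: exchange_pairs_def exchange_apply[OF assms])

lemma card_exchange_pairs_sym:
  assumes "x \<noteq> y"
  shows "card (exchange_pairs \<eta> x y \<eta>') = card (exchange_pairs \<eta>' x y \<eta>)"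
proof -
  have "card (exchange_pairs a x y b) \<le> card (exchange_pairs b x y a)" for a b
    by (rule card_inj_on_le[OF _ swap_exchange_pairs_subset[OF assms] finite_exchange_pairs]) simp
  then show ?thesis by (meson le_antisym)
qed

lemma pmf_ie_step:
  assumes "finite E" "E \<noteq> {}"
  shows "pmf (ie_step E \<eta>) \<eta>'
           = (\<Sum>(x, y)\<in>E. real (card (exchange_pairs \<eta> x y \<eta>')) / ((real (\<eta> x) + 1) * (real (\<eta> y) + 1))) / card E"
proof -
  have "(\<Sum>u1\<in>{0..\<eta> x}. \<Sum>u2\<in>{0..\<eta> y}. indicator {\<eta>'} (exchange \<eta> x y u1 u2) :: real)
          = card (exchange_pairs \<eta> x y \<eta>')" for x y
  proof -
    have "(\<Sum>u1\<in>{0..\<eta> x}. \<Sum>u2\<in>{0..\<eta> y}. indicator {\<eta>'} (exchange \<eta> x y u1 u2) :: real)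
            = (\<Sum>p\<in>{0..\<eta> x} \<times> {0..\<eta> y}. of_bool (case_prod (exchange \<eta> x y) p = \<eta>'))"
      by (subst sum.cartesian_product) (simp add: indicator_def case_prod_beta)
    also have "\<dots> = card (exchange_pairs \<eta> x y \<eta>')"
      by (subst sum_of_bool_eq) (auto simp: exchange_pairs_def intro!: arg_cong[where f = card])
    finally show ?thesis .
  qed
  then show ?thesis
    using assms unfolding ie_step_eq_exchange
    by (simp add: pmf_bind_pmf_of_set case_prod_beta sum_divide_distrib[symmetric] indicator_def
        add.commute mult.commute)
qed

definition config_weight :: "'a set \<Rightarrow> ('a \<Rightarrow> nat) \<Rightarrow> nat" where
  "config_weight V \<eta> = (\<Prod>v\<in>V. \<eta> v + 1)"

lemma config_weight_pos: "0 < config_weight V \<eta>"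
  unfolding config_weight_def by (rule prod_pos) simp

lemma config_weight_exchange_balance:
  assumes "finite V" "x \<in> V" "y \<in> V" "x \<noteq> y"
  shows "real (config_weight V \<eta>) * (real (card (exchange_pairs \<eta> x y \<eta>')) / ((real (\<eta> x) + 1) * (real (\<eta> y) + 1)))
       = real (config_weight V \<eta>') * (real (card (exchange_pairs \<eta>' x y \<eta>)) / ((real (\<eta>' x) + 1) * (real (\<eta>' y) + 1)))"
proof -
  define W where "W \<zeta> = (\<Prod>v\<in>V - {x, y}. real (\<zeta> v) + 1)" for \<zeta> :: "'a \<Rightarrow> nat"
  have xy: "{x, y} \<subseteq> V" using assms by simp
  \<comment> \<open>The factors of the weight at \<open>x\<close> and \<open>y\<close> cancel against the uniform choice of \<open>U\<^sub>1, U\<^sub>2\<close>.\<close>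
  have cancel: "real (config_weight V \<zeta>) * (n / ((real (\<zeta> x) + 1) * (real (\<zeta> y) + 1))) = W \<zeta> * n"
    for \<zeta> and n :: real
  proof -
    have "real (config_weight V \<zeta>) = W \<zeta> * ((real (\<zeta> x) + 1) * (real (\<zeta> y) + 1))"
      unfolding config_weight_def W_def of_nat_prod prod.subset_diff[OF xy \<open>finite V\<close>]
      using \<open>x \<noteq> y\<close> by (simp add: algebra_simps)
    moreover have "(real (\<zeta> x) + 1) * (real (\<zeta> y) + 1) \<noteq> 0" by simp
    ultimately show ?thesis by (simp add: field_simps)
  qed
  have same_card: "card (exchange_pairs \<eta> x y \<eta>') = card (exchange_pairs \<eta>' x y \<eta>)"
    by (rule card_exchange_pairs_sym[OF \<open>x \<noteq> y\<close>])
  show ?thesis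
  proof (cases "exchange_pairs \<eta> x y \<eta>' = {}")
    case True
    then show ?thesis unfolding cancel using same_card by simp
  next
    case False
    then obtain u1 u2 where "\<eta>' = exchange \<eta> x y u1 u2" by (auto simp: exchange_pairs_def)
    then have "W \<eta> = W \<eta>'" unfolding W_def by (intro prod.cong) (auto simp: exchange_apply[OF \<open>x \<noteq> y\<close>])
    then show ?thesis unfolding cancel using same_card by simp
  qed
qed

lemma ie_step_detailed_balance:
  assumes "simple_graph V E" "E \<noteq> {}"
  shows "config_weight V \<eta> * pmf (ie_step E \<eta>) \<eta>' = config_weight V \<eta>' * pmf (ie_step E \<eta>') \<eta>"
proof -
  have "finite V" using assms(1) by (simp add: simple_graph_def)
  have "real (config_weight V \<eta>) * (real (card (exchange_pairs \<eta> x y \<eta>')) / ((real (\<eta> x) + 1) * (real (\<eta> y) + 1)))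
      = real (config_weight V \<eta>') * (real (card (exchange_pairs \<eta>' x y \<eta>)) / ((real (\<eta>' x) + 1) * (real (\<eta>' y) + 1)))"
    if "(x, y) \<in> E" for x y
    using config_weight_exchange_balance[OF \<open>finite V\<close>] simple_graph_edge_neq[OF assms(1) that] by blast
  then show ?thesis
    unfolding pmf_ie_step[OF simple_graph_finite_edges[OF assms(1)] assms(2)] times_divide_eq_right
      sum_distrib_left
    by (intro arg_cong[where f = "\<lambda>s. s / real (card E)"] sum.cong) auto
qed

(* Unlike exchange, this also makes sense for u = w, which occurs along closed walks. *)
definition move_coin :: "('a \<Rightarrow> nat) \<Rightarrow> 'a \<Rightarrow> 'a \<Rightarrow> 'a \<Rightarrow> nat" where
  "move_coin \<eta> u w = (\<lambda>z. \<eta> z - of_bool (z = u) + of_bool (z = w))"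

lemma move_coin_eq_exchange: "u \<noteq> w \<Longrightarrow> move_coin \<eta> u w = exchange \<eta> u w 1 0"
  by (auto simp: move_coin_def exchange_apply)

lemma move_coin_self: "1 \<le> \<eta> u \<Longrightarrow> move_coin \<eta> u u = \<eta>"
  by (auto simp: move_coin_def)

lemma move_coin_move_coin: "1 \<le> \<eta> u \<Longrightarrow> move_coin (move_coin \<eta> u v) v w = move_coin \<eta> u w"
  by (auto simp: move_coin_def)

lemma move_coin_reachable:
  assumes "simple_graph V E" "(u, w) \<in> E\<^sup>*" "1 \<le> \<eta> u"
  shows "(\<eta>, move_coin \<eta> u w) \<in> {(a, b). b \<in> set_pmf (ie_step E a)}\<^sup>*"
  using assms(2,3)
proof (induction u arbitrary: \<eta> rule: converse_rtrancl_induct)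
  case base
  then show ?case by (simp add: move_coin_self)
next
  case (step u v)
  have "u \<noteq> v" using simple_graph_edge_neq[OF assms(1) step(1)] by simp
  have "move_coin \<eta> u v = exchange \<eta> u v 1 0" by (rule move_coin_eq_exchange[OF \<open>u \<noteq> v\<close>])
  also have "\<dots> \<in> set_pmf (ie_step E \<eta>)"
    using step(1,4) simple_graph_finite_edges[OF assms(1)]
    by (subst set_pmf_ie_step) auto
  finally have first: "(\<eta>, move_coin \<eta> u v) \<in> {(a, b). b \<in> set_pmf (ie_step E a)}" by simp
  have "1 \<le> move_coin \<eta> u v v" using \<open>u \<noteq> v\<close> by (simp add: move_coin_def)
  then have "(move_coin \<eta> u v, move_coin \<eta> u w) \<in> {(a, b). b \<in> set_pmf (ie_step E a)}\<^sup>*"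
    using step.IH move_coin_move_coin[of \<eta> u v w, OF step(4)] by metis
  with first show ?case by (rule converse_rtrancl_into_rtrancl)
qed

lemma sum_diff_move_coin_less:
  assumes "u \<in> V" "b u < a u" "a w < b w" "finite V"
  shows "(\<Sum>v\<in>V. move_coin a u w v - b v) < (\<Sum>v\<in>V. a v - b v)"
proof (rule sum_strict_mono_ex1[OF \<open>finite V\<close>])
  have "u \<noteq> w" using assms(2,3) by auto
  have "move_coin a u w v - b v \<le> a v - b v" for v
    using \<open>a w < b w\<close> by (cases "v = w"; cases "v = u") (simp_all add: move_coin_def)
  then show "\<forall>v\<in>V. move_coin a u w v - b v \<le> a v - b v" ..
  have "move_coin a u w u - b u < a u - b u"
    using \<open>b u < a u\<close> \<open>u \<noteq> w\<close> by (simp add: move_coin_def)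
  with \<open>u \<in> V\<close> show "\<exists>v\<in>V. move_coin a u w v - b v < a v - b v" ..
qed

lemma ie_step_irreducible:
  assumes "simple_graph V E" "connected_graph V E" "a \<in> configs V M" "b \<in> configs V M"
  shows "(a, b) \<in> {(a, b). b \<in> set_pmf (ie_step E a)}\<^sup>*"
  using assms(3)
proof (induction "\<Sum>v\<in>V. a v - b v" arbitrary: a rule: less_induct)
  case less
  have "finite V" using assms(1) by (simp add: simple_graph_def)
  show ?case
  proof (cases "a = b")
    case False
    obtain u where u: "u \<in> V" "b u < a u"
      using configs_ex_less[OF assms(4) less.prems] False \<open>finite V\<close> by metis
    obtain w where w: "w \<in> V" "a w < b w"
      using configs_ex_less[OF less.prems assms(4) False \<open>finite V\<close>] by metis
    have "u \<noteq> w" using u w by auto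
    let ?a = "move_coin a u w"
    have "?a = exchange a u w 1 0" by (rule move_coin_eq_exchange[OF \<open>u \<noteq> w\<close>])
    also have "\<dots> \<in> configs V M"
      using u w \<open>u \<noteq> w\<close> by (intro exchange_in_configs[OF less.prems \<open>finite V\<close>]) auto
    finally have "?a \<in> configs V M" .
    moreover have "(\<Sum>v\<in>V. ?a v - b v) < (\<Sum>v\<in>V. a v - b v)"
      using u(1,2) w(2) \<open>finite V\<close> by (rule sum_diff_move_coin_less)
    ultimately have "(?a, b) \<in> {(a, b). b \<in> set_pmf (ie_step E a)}\<^sup>*"
      by (rule less.hyps[rotated])
    moreover have "(a, ?a) \<in> {(a, b). b \<in> set_pmf (ie_step E a)}\<^sup>*"
      using assms(2) u w unfolding connected_graph_def by (intro move_coin_reachable[OF assms(1)]) auto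
    ultimately show ?thesis by simp
  qed simp
qed

lemma sum_config_weight_fixed_value:
  assumes "finite V" "x \<in> V" "c \<le> M"
  shows "(\<Sum>\<eta>\<in>{\<eta> \<in> configs V M. \<eta> x = c}. config_weight V \<eta>)
           = (c + 1) * (\<Sum>\<eta>\<in>configs (V - {x}) (M - c). config_weight (V - {x}) \<eta>)"
proof -
  have weight: "config_weight V \<eta> = (\<eta> x + 1) * config_weight (V - {x}) \<eta>" for \<eta>
    unfolding config_weight_def using assms(1,2) by (simp add: prod.remove)
  have sum: "sum \<eta> V = \<eta> x + sum \<eta> (V - {x})" for \<eta>
    using assms(1,2) by (simp add: sum.remove)
  have "(\<Sum>\<eta>\<in>{\<eta> \<in> configs V M. \<eta> x = c}. config_weight V \<eta>)
          = (\<Sum>\<eta>\<in>configs (V - {x}) (M - c). (c + 1) * config_weight (V - {x}) \<eta>)"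
  proof (rule sum.reindex_bij_witness[where i = "\<lambda>\<eta>. \<eta>(x := c)" and j = "\<lambda>\<eta>. \<eta>(x := 0)"])
    fix \<eta> assume \<eta>: "\<eta> \<in> {\<eta> \<in> configs V M. \<eta> x = c}"
    then show "\<eta>(x := 0, x := c) = \<eta>" by auto
    have "sum (\<eta>(x := 0)) (V - {x}) = sum \<eta> (V - {x})" by (intro sum.cong) auto
    then show "\<eta>(x := 0) \<in> configs (V - {x}) (M - c)"
      using \<eta> sum[of \<eta>] by (auto simp: configs_def)
    have "config_weight (V - {x}) (\<eta>(x := 0)) = config_weight (V - {x}) \<eta>"
      unfolding config_weight_def by (intro prod.cong) auto
    then show "(c + 1) * config_weight (V - {x}) (\<eta>(x := 0)) = config_weight V \<eta>"
      using \<eta> weight[of \<eta>] by simp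
  next
    fix \<eta> assume \<eta>: "\<eta> \<in> configs (V - {x}) (M - c)"
    then show "\<eta>(x := c, x := 0) = \<eta>" by (auto simp: configs_def fun_eq_iff)
    have "sum (\<eta>(x := c)) (V - {x}) = sum \<eta> (V - {x})" by (intro sum.cong) auto
    then show "\<eta>(x := c) \<in> {\<eta> \<in> configs V M. \<eta> x = c}"
      using \<eta> sum[of "\<eta>(x := c)"] assms by (auto simp: configs_def)
  qed
  then show ?thesis by (simp add: sum_distrib_left)
qed

lemma sum_config_weight:
  "finite V \<Longrightarrow> V \<noteq> {} \<Longrightarrow>
     (\<Sum>\<eta>\<in>configs V M. config_weight V \<eta>) = (M + 2 * card V - 1) choose (2 * card V - 1)"
proof (induction V arbitrary: M rule: finite_ne_induct)
  case (singleton v)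
  have "configs {v} M = {(\<lambda>_. 0)(v := M)}" by (auto simp: configs_def)
  then show ?case by (simp add: config_weight_def)
next
  case (insert v V)
  let ?V = "insert v V"
  have "card V \<ge> 1" using insert by (simp add: Suc_le_eq card_gt_0_iff)
  have "(\<Sum>\<eta>\<in>configs ?V M. config_weight ?V \<eta>)
          = (\<Sum>c\<le>M. \<Sum>\<eta>\<in>{\<eta> \<in> configs ?V M. \<eta> v = c}. config_weight ?V \<eta>)"
    using insert configs_le[of _ ?V M] by (intro sum.group[symmetric] finite_configs) auto
  also have "\<dots> = (\<Sum>c\<le>M. (c + 1) * ((M - c + (2 * card V - 1)) choose (2 * card V - 1)))"
    using insert \<open>card V \<ge> 1\<close> by (intro sum.cong) (simp_all add: sum_config_weight_fixed_value)
  also have "\<dots> = (M + (2 * card V - 1) + 2) choose ((2 * card V - 1) + 2)"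
    by (rule sum_mult_choose_diff_upper)
  finally show ?case
    using insert \<open>card V \<ge> 1\<close> by (simp del: binomial_Suc_Suc)
qed

lemma sum_config_weight_marginal:
  assumes "finite V" "x \<in> V" "card V \<ge> 2" "c \<le> M"
  shows "(\<Sum>\<eta>\<in>{\<eta> \<in> configs V M. \<eta> x = c}. config_weight V \<eta>)
           = (c + 1) * ((M - c + 2 * card V - 3) choose (2 * card V - 3))"
proof -
  have card: "card (V - {x}) = card V - 1" using assms by simp
  then have "card (V - {x}) \<noteq> 0" using assms(3) by simp
  then have "V - {x} \<noteq> {}" by (metis card.empty)
  then have "(\<Sum>\<eta>\<in>{\<eta> \<in> configs V M. \<eta> x = c}. config_weight V \<eta>)
               = (c + 1) * ((M - c + 2 * card (V - {x}) - 1) choose (2 * card (V - {x}) - 1))"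
    using sum_config_weight_fixed_value[OF assms(1,2,4)] sum_config_weight[OF finite_Diff[OF assms(1)]]
    by simp
  moreover have "M - c + 2 * card (V - {x}) - 1 = M - c + 2 * card V - 3"
    and "2 * card (V - {x}) - 1 = 2 * card V - 3"
    using card assms(3) by simp_all
  ultimately show ?thesis by (simp only:)
qed

definition ie_stationary :: "'a set \<Rightarrow> nat \<Rightarrow> ('a \<Rightarrow> nat) pmf" where
  "ie_stationary V M = weighted_pmf (configs V M) (\<lambda>\<eta>. real (config_weight V \<eta>))"

lemma ie_dist_tendsto_ie_stationary:
  assumes "simple_graph V E" "connected_graph V E" "E \<noteq> {}" "\<xi> \<in> configs V M"
  shows "(\<lambda>t. measure_pmf.prob (ie_dist E \<xi> t) A) \<longlonglongrightarrow> measure_pmf.prob (ie_stationary V M) A"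
proof -
  let ?S = "configs V M" and ?w = "\<lambda>\<eta>. real (config_weight V \<eta>)"
  have "finite ?S" using assms(1) by (simp add: simple_graph_def finite_configs)
  have "0 < sum ?w ?S"
    using \<open>finite ?S\<close> assms(4) by (intro sum_pos2[of _ \<xi>]) (auto simp: config_weight_pos)
  have closed: "\<And>\<eta>. \<eta> \<in> ?S \<Longrightarrow> set_pmf (ie_step E \<eta>) \<subseteq> ?S"
    by (rule set_pmf_ie_step_configs[OF assms(1,3)])
  have "weighted_pmf ?S ?w \<bind> ie_step E = weighted_pmf ?S ?w"
    using ie_step_detailed_balance[OF assms(1,3)]
    by (intro weighted_pmf_stationary[OF \<open>finite ?S\<close> _ \<open>0 < sum ?w ?S\<close> closed]) auto
  then show ?thesis
    unfolding ie_stationary_def ie_dist_eq_markov_iter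
    using set_pmf_weighted_pmf[OF \<open>finite ?S\<close> _ \<open>0 < sum ?w ?S\<close>] ie_step_irreducible[OF assms(1,2)]
      ie_step_self[OF simple_graph_finite_edges[OF assms(1)] assms(3)]
    by (intro markov_iter_tendsto_stationary[OF \<open>finite ?S\<close> assms(4) closed]) auto
qed

lemma prob_ie_stationary_marginal:
  assumes "finite V" "x \<in> V" "card V \<ge> 2" "c \<le> M"
  shows "measure_pmf.prob (ie_stationary V M) {\<eta>. \<eta> x = c}
           = real (c + 1) * real ((M - c + 2 * card V - 3) choose (2 * card V - 3))
               / real ((M + 2 * card V - 1) choose (2 * card V - 1))"
proof -
  let ?S = "configs V M" and ?w = "\<lambda>\<eta>. real (config_weight V \<eta>)"
  have total: "sum ?w ?S = real ((M + 2 * card V - 1) choose (2 * card V - 1))"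
    using sum_config_weight[OF \<open>finite V\<close>, of M] \<open>x \<in> V\<close> by (auto simp flip: of_nat_sum)
  have "{\<eta>. \<eta> x = c} \<inter> ?S = {\<eta> \<in> ?S. \<eta> x = c}" by auto
  then have "measure_pmf.prob (ie_stationary V M) {\<eta>. \<eta> x = c}
               = real (\<Sum>\<eta>\<in>{\<eta> \<in> ?S. \<eta> x = c}. config_weight V \<eta>) / sum ?w ?S"
    unfolding ie_stationary_def using \<open>finite V\<close> total
    by (subst prob_weighted_pmf) (simp_all add: finite_configs)
  then show ?thesis
    unfolding total sum_config_weight_marginal[OF assms] by (simp only: of_nat_mult)
qed

theorem theorem2:
  fixes V :: "'a set" and E :: "('a \<times> 'a) set" and N M c :: nat and \<xi> :: "'a \<Rightarrow> nat" and x :: 'a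
  assumes "simple_graph V E" and "connected_graph V E"
    and "card V = N" and "N \<ge> 2"
    and "\<xi> \<in> configs V M"
    and "x \<in> V" and "c \<le> M"
  shows "(\<lambda>t. measure_pmf.prob (ie_dist E \<xi> t) {\<eta>. \<eta> x = c})
           \<longlonglongrightarrow> real (c + 1) * real ((M - c + 2 * N - 3) choose (2 * N - 3))
                / real ((M + 2 * N - 1) choose (2 * N - 1))"
proof -
  have "finite V" using assms(1) by (simp add: simple_graph_def)
  have "card (V - {x}) \<noteq> 0" using assms(3,4,6) \<open>finite V\<close> by simp
  then obtain y where "y \<in> V" "y \<noteq> x" by (metis DiffE card.empty ex_in_conv singletonI)
  then have "E \<noteq> {}" using connected_graph_edges_nonempty[OF assms(2) \<open>x \<in> V\<close>] by blast
  then have "(\<lambda>t. measure_pmf.prob (ie_dist E \<xi> t) {\<eta>. \<eta> x = c})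
               \<longlonglongrightarrow> measure_pmf.prob (ie_stationary V M) {\<eta>. \<eta> x = c}"
    by (rule ie_dist_tendsto_ie_stationary[OF assms(1,2) _ assms(5)])
  also have "measure_pmf.prob (ie_stationary V M) {\<eta>. \<eta> x = c}
               = real (c + 1) * real ((M - c + 2 * N - 3) choose (2 * N - 3))
                   / real ((M + 2 * N - 1) choose (2 * N - 1))"
    using prob_ie_stationary_marginal[OF \<open>finite V\<close> assms(6) _ assms(7)] assms(3,4) by simp
  finally show ?thesis .
qed

end
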